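(* In the multiple-choice secretary problem with predictions with capacity $k$, run the Learned Kleinberg algorithm with any threshold $\theta\ge0$, and assume $1\le |M|\le\sqrt{k}\ln k$. Let $t_M=\min_{i\in M}t_i$ be the first arrival time of a candidate in $M$, let $S=\{i\in\hat S: t_i<t_M\}$ be the set of candidates hired before time $t_M$, and define $k'=k-|S|-1$. Then $\Pr(k'\ge\sqrt{k}\ln k)\ge 1-\frac{3\ln k}{\sqrt{k}}$.
   Context: Multiple-choice secretary problem with predictions (continuous-time model): there are $n$ candidates $N=\{1,\dots,n\}$, each with actual value $v(i)>0$ and predicted value $\hat v(i)\ge 0$ (known in advance), and a capacity $k$ (positive integer). Each candidate $i$ independently receives an arrival time $t_i$ uniform on $[0,1]$. For $S\subseteq N$, $\hat v(S)=\sum_{i\in S}\hat v(i)$. $M=\{i\in N : |1-\hat v(i)/v(i)|>\theta\}$. The Learned Kleinberg algorithm fixes $\hat S\in\arg\max_{S\subseteq N,|S|\le k}\hat v(S)$, hires the candidates of $\hat S$ as they arrive until the first candidate of $M$ arrives (at time $t_M$), then hires that candidate and runs Kleinberg's multiple-choice secretary algorithm with the remaining capacity $k'=k-|S|-1$ on the later-arriving candidates. The probability is over the arrival times. *)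

theory Defs
  imports "HOL-Probability.Probability"
begin

definition mispredicted :: "nat set \<Rightarrow> (nat \<Rightarrow> real) \<Rightarrow> (nat \<Rightarrow> real) \<Rightarrow> real \<Rightarrow> nat set" where
  "mispredicted N v vhat \<theta> = {i \<in> N. \<bar>1 - vhat i / v i\<bar> > \<theta>}"

definition is_pred_opt :: "nat set \<Rightarrow> (nat \<Rightarrow> real) \<Rightarrow> nat \<Rightarrow> nat set \<Rightarrow> bool" where
  "is_pred_opt N vhat k Shat \<longleftrightarrow> Shat \<subseteq> N \<and> card Shat \<le> k \<and>
     (\<forall>S. S \<subseteq> N \<longrightarrow> card S \<le> k \<longrightarrow> sum vhat S \<le> sum vhat Shat)"

definition first_arrival :: "nat set \<Rightarrow> (nat \<Rightarrow> real) \<Rightarrow> real" where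
  "first_arrival M t = Min (t ` M)"

definition hired_before :: "nat set \<Rightarrow> nat set \<Rightarrow> (nat \<Rightarrow> real) \<Rightarrow> nat set" where
  "hired_before Shat M t = {i \<in> Shat. t i < first_arrival M t}"

(* k' = k - |S| - 1, as a real number (may be negative) *)
definition remaining_capacity :: "nat \<Rightarrow> nat set \<Rightarrow> nat set \<Rightarrow> (nat \<Rightarrow> real) \<Rightarrow> real" where
  "remaining_capacity k Shat M t = real k - real (card (hired_before Shat M t)) - 1"

definition arrival_space :: "nat set \<Rightarrow> (nat \<Rightarrow> real) measure" where
  "arrival_space N = PiM N (\<lambda>_. uniform_measure lborel {0..1})"

end

theory Submission
  imports Defs
begin

(* Put T = Shat - M, fix j in M and let A = insert j T. Everyone hired before t_M lies in T and
   arrives before t_j, so k' < c forces fewer than R = |T| - k + c + 1 other members of A to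
   arrive after j. In every outcome at most R + 1 members of A have this property (the earliest
   of them sees all the others arrive after it), and by exchangeability of the arrival times j
   has it with the same probability as any other member of A. Hence the probability is at most
   (R + 1)/(|T| + 1) <= (c + 2)/(k + 1), and for c = sqrt k ln k >= 1 this is at most
   3 ln k / sqrt k. *)

definition late_count :: "'a set \<Rightarrow> ('a \<Rightarrow> real) \<Rightarrow> 'a \<Rightarrow> nat" where
  "late_count A t a = card {i \<in> A - {a}. t a \<le> t i}"

lemma real_card_filter_eq_sum:
  "finite F \<Longrightarrow> real (card {i \<in> F. P i}) = (\<Sum>i\<in>F. if P i then 1 else 0)"
  by (simp add: sum.If_cases Int_def)

lemma card_late_count_less:
  fixes t :: "'a \<Rightarrow> real"
  assumes "finite A" "0 \<le> R"
  shows "real (card {a \<in> A. real (late_count A t a) < R}) < R + 1"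
proof -
  define Q where "Q = {a \<in> A. real (late_count A t a) < R}"
  have "finite Q" using assms(1) by (simp add: Q_def)
  show ?thesis
  proof (cases "Q = {}")
    case True
    show ?thesis unfolding Q_def[symmetric] True using assms(2) by simp
  next
    case False
    have "Min (t ` Q) \<in> t ` Q" using \<open>finite Q\<close> False by simp
    then obtain a0 where a0: "a0 \<in> Q" "t a0 = Min (t ` Q)" by auto
    have "Q - {a0} \<subseteq> {i \<in> A - {a0}. t a0 \<le> t i}"
      using a0 \<open>finite Q\<close> by (auto simp: Q_def)
    then have "card (Q - {a0}) \<le> late_count A t a0"
      unfolding late_count_def using assms(1) by (intro card_mono) auto
    moreover have "card Q = card (Q - {a0}) + 1"
      using card.remove[OF \<open>finite Q\<close> a0(1)] by simp
    moreover have "real (late_count A t a0) < R"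
      using a0(1) by (simp add: Q_def)
    ultimately show ?thesis unfolding Q_def[symmetric] by linarith
  qed
qed

lemma prob_space_arrival_space: "prob_space (arrival_space N)"
  unfolding arrival_space_def by (intro prob_space_PiM prob_space_uniform_measure) simp_all

lemma measurable_arrival_time [measurable]:
  assumes "i \<in> N"
  shows "(\<lambda>t. t i) \<in> borel_measurable (arrival_space N)"
proof -
  have "(\<lambda>t. t i) \<in> arrival_space N \<rightarrow>\<^sub>M uniform_measure lborel {0..1}"
    unfolding arrival_space_def using assms by (rule measurable_component_singleton)
  then show ?thesis by (simp cong: measurable_cong_sets)
qed

lemma late_count_event_measurable:
  assumes "finite A" "A \<subseteq> N" "a \<in> N"
  shows "{t \<in> space (arrival_space N). real (late_count A t a) < R} \<in> sets (arrival_space N)"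
proof -
  have "(\<lambda>t. real (late_count A t a)) \<in> borel_measurable (arrival_space N)"
    unfolding late_count_def real_card_filter_eq_sum[OF finite_Diff[OF assms(1)]]
  proof (rule borel_measurable_sum)
    fix i assume "i \<in> A - {a}"
    then have "i \<in> N" using assms(2) by auto
    then show "(\<lambda>t. if t a \<le> t i then 1 else 0 :: real) \<in> borel_measurable (arrival_space N)"
      using assms(3) by measurable
  qed
  then show ?thesis by measurable
qed

lemma remaining_capacity_event_measurable:
  assumes "finite Shat" "Shat \<subseteq> N" "finite M" "M \<subseteq> N"
  shows "{t \<in> space (arrival_space N). remaining_capacity k Shat M t < c} \<in> sets (arrival_space N)"
proof -
  have [measurable]: "first_arrival M \<in> borel_measurable (arrival_space N)"
    unfolding first_arrival_def using assms by (intro borel_measurable_Min) auto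
  then have "(\<lambda>t. remaining_capacity k Shat M t) \<in> borel_measurable (arrival_space N)"
    unfolding remaining_capacity_def hired_before_def real_card_filter_eq_sum[OF assms(1)]
  proof (intro borel_measurable_diff borel_measurable_of_real borel_measurable_sum)
    fix i assume "i \<in> Shat"
    then have "i \<in> N" using assms(2) by auto
    then show "(\<lambda>t. if t i < first_arrival M t then 1 else 0 :: real)
        \<in> borel_measurable (arrival_space N)"
      by measurable
  qed simp_all
  then show ?thesis by measurable
qed

lemma late_count_reindex:
  assumes "inj_on \<sigma> A" "b \<in> A" "\<And>i. i \<in> A \<Longrightarrow> s i = t (\<sigma> i)"
  shows "late_count A s b = late_count (\<sigma> ` A) t (\<sigma> b)"
proof -
  have "{i \<in> \<sigma> ` A - {\<sigma> b}. t (\<sigma> b) \<le> t i} = \<sigma> ` {i \<in> A - {b}. s b \<le> s i}"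
    using assms by (auto simp: inj_on_eq_iff)
  moreover have "inj_on \<sigma> {i \<in> A - {b}. s b \<le> s i}"
    using assms(1) by (rule inj_on_subset) auto
  ultimately show ?thesis unfolding late_count_def by (simp add: card_image)
qed

lemma arrival_space_reindex:
  assumes "inj_on \<sigma> N" "\<sigma> \<in> N \<rightarrow> N"
  shows "distr (arrival_space N) (arrival_space N) (\<lambda>t. \<lambda>i\<in>N. t (\<sigma> i)) = arrival_space N"
proof -
  have "prob_space (uniform_measure lborel {0..1::real})"
    by (intro prob_space_uniform_measure) simp_all
  then show ?thesis
    using distr_PiM_reindex[of N "\<lambda>_. uniform_measure lborel {0..1::real}", OF _ assms]
    unfolding arrival_space_def by simp
qed

lemma late_count_event_prob_eq:
  assumes "finite A" "A \<subseteq> N" "a \<in> A" "b \<in> A"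
  shows "measure (arrival_space N) {t \<in> space (arrival_space N). real (late_count A t a) < R}
       = measure (arrival_space N) {t \<in> space (arrival_space N). real (late_count A t b) < R}"
proof -
  define \<sigma> where "\<sigma> = Transposition.transpose a b"
  define \<phi> where "\<phi> t = (\<lambda>i\<in>N. t (\<sigma> i))" for t :: "nat \<Rightarrow> real"
  define E where "E c = {t \<in> space (arrival_space N). real (late_count A t c) < R}" for c
  have \<sigma>: "inj_on \<sigma> N" "\<sigma> \<in> N \<rightarrow> N"
    using assms by (auto simp: \<sigma>_def Transposition.transpose_def)
  have \<phi>: "\<phi> \<in> arrival_space N \<rightarrow>\<^sub>M arrival_space N"
    unfolding \<phi>_def arrival_space_def using \<sigma>(2)
    by (intro measurable_restrict measurable_component_singleton) auto
  have "late_count A (\<phi> t) b = late_count A t a" for t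
  proof -
    have "\<phi> t i = t (\<sigma> i)" if "i \<in> A" for i
      using that assms(2) by (auto simp: \<phi>_def)
    then have "late_count A (\<phi> t) b = late_count (\<sigma> ` A) t (\<sigma> b)"
      using assms(4) by (intro late_count_reindex) (auto simp: \<sigma>_def)
    also have "\<dots> = late_count A t a"
      using assms(3,4) by (simp add: \<sigma>_def)
    finally show ?thesis .
  qed
  then have "\<phi> -` E b \<inter> space (arrival_space N) = E a"
    using measurable_space[OF \<phi>] by (auto simp: E_def)
  moreover have "E b \<in> sets (arrival_space N)"
    unfolding E_def using assms by (intro late_count_event_measurable) auto
  ultimately have
    "measure (distr (arrival_space N) (arrival_space N) \<phi>) (E b) = measure (arrival_space N) (E a)"
    by (simp add: measure_distr[OF \<phi>])
  then show ?thesis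
    unfolding \<phi>_def arrival_space_reindex[OF \<sigma>] by (simp add: E_def)
qed

lemma prob_late_count_less_le:
  assumes "finite A" "A \<subseteq> N" "b \<in> A" "0 \<le> R"
  shows "measure (arrival_space N) {t \<in> space (arrival_space N). real (late_count A t b) < R}
         \<le> (R + 1) / card A"
proof -
  interpret P: prob_space "arrival_space N" by (rule prob_space_arrival_space)
  define E where "E a = {t \<in> space (arrival_space N). real (late_count A t a) < R}" for a
  have E_sets: "E a \<in> P.events" if "a \<in> A" for a
    unfolding E_def using assms that by (intro late_count_event_measurable) auto
  have E_int: "integrable (arrival_space N) (indicator (E a) :: _ \<Rightarrow> real)" if "a \<in> A" for a
    using E_sets[OF that] by (simp add: less_top[symmetric])
  have E_space: "E a \<inter> space (arrival_space N) = E a" for a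
    by (auto simp: E_def)
  have "real (card A) * P.prob (E b) = (\<Sum>a\<in>A. P.prob (E a))"
    using late_count_event_prob_eq[OF assms(1,2) _ assms(3)] by (simp add: E_def)
  also have "\<dots> = P.expectation (\<lambda>t. \<Sum>a\<in>A. indicator (E a) t)"
    using E_int by (simp add: Bochner_Integration.integral_sum E_space)
  also have "\<dots> \<le> P.expectation (\<lambda>_. R + 1)"
  proof (rule integral_mono)
    fix t assume "t \<in> space (arrival_space N)"
    then have "(\<Sum>a\<in>A. indicator (E a) t) = real (card {a \<in> A. real (late_count A t a) < R})"
      using real_card_filter_eq_sum[OF assms(1)] by (simp add: E_def indicator_def of_bool_def)
    also have "\<dots> < R + 1"
      by (rule card_late_count_less[OF assms(1,4)])
    finally show "(\<Sum>a\<in>A. indicator (E a) t) \<le> R + 1" by simp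
  qed (use E_int in auto)
  also have "\<dots> = R + 1"
    by (simp add: P.prob_space)
  finally have "real (card A) * P.prob (E b) \<le> R + 1" .
  moreover have "0 < real (card A)"
    using assms(1,3) by (auto simp: card_gt_0_iff)
  ultimately show ?thesis
    by (simp add: E_def pos_le_divide_eq mult.commute)
qed

lemma remaining_capacity_less_imp_late_count_less:
  assumes "finite Shat" "finite M" "j \<in> M" "remaining_capacity k Shat M t < c"
  shows "real (late_count (insert j (Shat - M)) t j) < real (card (Shat - M)) - real k + c + 1"
proof -
  define T where "T = Shat - M"
  have "finite T" using assms(1) by (simp add: T_def)
  have "hired_before Shat M t \<subseteq> {i \<in> T. t i < t j}"
  proof
    fix i assume "i \<in> hired_before Shat M t"
    then have i: "i \<in> Shat" "t i < Min (t ` M)"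
      by (auto simp: hired_before_def first_arrival_def)
    moreover have "i \<notin> M"
    proof
      assume "i \<in> M"
      then have "Min (t ` M) \<le> t i" using assms(2) by simp
      with i(2) show False by simp
    qed
    moreover have "Min (t ` M) \<le> t j"
      using assms(2,3) by simp
    ultimately show "i \<in> {i \<in> T. t i < t j}"
      by (simp add: T_def)
  qed
  then have "card (hired_before Shat M t) \<le> card {i \<in> T. t i < t j}"
    using \<open>finite T\<close> by (intro card_mono) auto
  moreover have "late_count (insert j T) t j + card {i \<in> T. t i < t j} = card T"
  proof -
    have "insert j T - {j} = T"
      using assms(3) by (auto simp: T_def)
    moreover have "card {i \<in> T. t j \<le> t i} + card {i \<in> T. t i < t j} = card T"
      using \<open>finite T\<close> by (subst card_Un_disjoint[symmetric]) (auto intro: arg_cong[where f=card])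
    ultimately show ?thesis
      unfolding late_count_def by simp
  qed
  ultimately show ?thesis
    using assms(4) unfolding remaining_capacity_def T_def[symmetric] by linarith
qed

lemma prob_remaining_capacity_less:
  assumes "finite Shat" "Shat \<subseteq> N" "card Shat \<le> k" "finite M" "M \<subseteq> N" "M \<noteq> {}" "0 \<le> c"
  shows "measure (arrival_space N) {t \<in> space (arrival_space N). remaining_capacity k Shat M t < c}
         \<le> (c + 2) / (k + 1)"
proof -
  interpret P: prob_space "arrival_space N" by (rule prob_space_arrival_space)
  obtain j where j: "j \<in> M" using assms(6) by blast
  define T where "T = Shat - M"
  define A where "A = insert j T"
  define R where "R = real (card T) - real k + c + 1"
  define E where "E = {t \<in> space (arrival_space N). real (late_count A t j) < R}"
  have "finite T" "card T \<le> k"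
    using assms(1,3) card_mono[OF assms(1), of T] by (auto simp: T_def)
  have A: "finite A" "A \<subseteq> N" "j \<in> A" "card A = card T + 1"
    using \<open>finite T\<close> assms(2,5) j by (auto simp: A_def T_def)
  have "{t \<in> space (arrival_space N). remaining_capacity k Shat M t < c} \<subseteq> E"
    using remaining_capacity_less_imp_late_count_less[OF assms(1,4) j]
    by (auto simp: E_def A_def T_def R_def)
  moreover have "E \<in> P.events"
    unfolding E_def using A by (intro late_count_event_measurable) auto
  ultimately have bad_le_E:
    "P.prob {t \<in> space (arrival_space N). remaining_capacity k Shat M t < c} \<le> P.prob E"
    by (rule P.finite_measure_mono)
  consider "real k < c + 1" | "R < 0" | "c + 1 \<le> real k" "0 \<le> R"
    by linarith
  then show ?thesis
  proof cases
    case 1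
    then have "1 \<le> (c + 2) / (k + 1)" by simp
    then show ?thesis using P.prob_le_1 by (meson order_trans)
  next
    case 2
    then have "E = {}" by (auto simp: E_def)
    moreover have "0 \<le> (c + 2) / (k + 1)" using assms(7) by simp
    ultimately show ?thesis using bad_le_E by simp
  next
    case 3
    have "0 \<le> (real k - card T) * (real k - c - 1)"
      using 3 \<open>card T \<le> k\<close> by (intro mult_nonneg_nonneg) auto
    then have "(R + 1) * (k + 1) \<le> (c + 2) * (card T + 1)"
      by (simp add: R_def algebra_simps)
    then have "(R + 1) / card A \<le> (c + 2) / (k + 1)"
      using A(4) by (simp add: divide_simps)
    moreover have "P.prob E \<le> (R + 1) / card A"
      unfolding E_def using A 3 by (intro prob_late_count_less_le) auto
    ultimately show ?thesis using bad_le_E by linarith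
  qed
qed

theorem lemma3:
  fixes n k :: nat and v vhat :: "nat \<Rightarrow> real" and \<theta> :: real and Shat :: "nat set"
  assumes "k \<ge> 1"
    and "\<And>i. i \<in> {1..n} \<Longrightarrow> v i > 0"
    and "\<And>i. i \<in> {1..n} \<Longrightarrow> vhat i \<ge> 0"
    and "\<theta> \<ge> 0"
    and "is_pred_opt {1..n} vhat k Shat"
    and "1 \<le> card (mispredicted {1..n} v vhat \<theta>)"
    and "real (card (mispredicted {1..n} v vhat \<theta>)) \<le> sqrt k * ln k"
  shows "measure (arrival_space {1..n})
           {t \<in> space (arrival_space {1..n}).
              remaining_capacity k Shat (mispredicted {1..n} v vhat \<theta>) t \<ge> sqrt k * ln k}
         \<ge> 1 - 3 * ln k / sqrt k"
proof -
  define M where "M = mispredicted {1..n} v vhat \<theta>"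
  define c where "c = sqrt k * ln k"
  have "M \<subseteq> {1..n}"
    by (auto simp: M_def mispredicted_def)
  moreover have "M \<noteq> {}"
    using assms(6) by (auto simp: M_def)
  ultimately have M: "finite M" "M \<subseteq> {1..n}" "M \<noteq> {}"
    using finite_subset by auto
  have Shat: "finite Shat" "Shat \<subseteq> {1..n}" "card Shat \<le> k"
    using assms(5) by (auto simp: is_pred_opt_def intro: finite_subset)
  have "1 \<le> c"
    using assms(6,7) unfolding M_def[symmetric] c_def[symmetric] by linarith
  then have "k \<ge> 2"
    using assms(1) by (cases "k = 1") (auto simp: c_def)
  define P where "P = arrival_space {1..n}"
  define bad where "bad = {t \<in> space P. remaining_capacity k Shat M t < c}"
  have "measure P bad \<le> (c + 2) / (k + 1)"
    unfolding P_def bad_def using Shat M \<open>1 \<le> c\<close> by (intro prob_remaining_capacity_less) auto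
  also have "\<dots> \<le> (c + 2) / k"
    using \<open>1 \<le> c\<close> \<open>k \<ge> 2\<close> by (intro divide_left_mono) auto
  also have "\<dots> \<le> 3 * c / k"
    using \<open>1 \<le> c\<close> by (intro divide_right_mono) auto
  also have "\<dots> = 3 * ln k / sqrt k"
  proof -
    have "real k = sqrt k * sqrt k" by simp
    then show ?thesis using \<open>k \<ge> 2\<close> by (simp add: c_def field_simps)
  qed
  finally have "measure P bad \<le> 3 * ln k / sqrt k" .
  moreover have "measure P (space P - bad) = 1 - measure P bad"
    unfolding P_def bad_def using Shat M
    by (intro prob_space.prob_compl prob_space_arrival_space remaining_capacity_event_measurable)
  moreover have "space P - bad = {t \<in> space P. c \<le> remaining_capacity k Shat M t}"
    by (auto simp: bad_def)
  ultimately show ?thesis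
    unfolding M_def[symmetric] c_def[symmetric] P_def[symmetric] by simp
qed

end
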